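(* Let $c,d,s$ be positive integers with $c,d\le s$. Let $E$ be an $s\times s$ random matrix uniformly distributed over $\mathbb{F}_q^{s\times s}$, and let $F$ and $G$ be arbitrary (fixed) full-rank matrices of sizes $c\times s$ and $s\times d$, respectively. Then $$H_q(FE\mid EG)\ge cs-cd.$$
   Context: $\mathbb{F}_q$ is a finite field with $q$ elements; $H_q$ denotes Shannon (conditional) entropy with logarithm base $q$. *)

theory Defs
  imports "Jordan_Normal_Form.DL_Rank" "HOL-Probability.Probability_Mass_Function"
begin

definition cond_entropy_pmf ::
  "real \<Rightarrow> 'w pmf \<Rightarrow> ('w \<Rightarrow> 'x) \<Rightarrow> ('w \<Rightarrow> 'y) \<Rightarrow> real" where
  "cond_entropy_pmf b p X Y =
     - (\<Sum>xy \<in> (\<lambda>w. (X w, Y w)) ` set_pmf p.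
          let pxy = measure_pmf.prob p {w. X w = fst xy \<and> Y w = snd xy};
              py  = measure_pmf.prob p {w. Y w = snd xy}
          in pxy * log b (pxy / py))"

end

theory Submission
  imports Defs
begin

text \<open>
  Since F has full row rank it has a right inverse R. For every c \<times> s matrix M with M G = 0,
  the translation E \<mapsto> E + R M fixes E G and shifts F E by M. So the fibre {E G = Y} contains
  one disjoint translate of the joint fibre {F E = X, E G = Y} per element of the left kernel of G,
  which has at least q^(cs - cd) elements. Hence P(F E = X | E G = Y) \<le> q^(cd - cs) for all
  values X, Y, and averaging - log_q of these conditional probabilities gives
  H_q(F E | E G) \<ge> cs - cd.
\<close>

lemma bij_betw_carrier_mat_PiE:
  "bij_betw (\<lambda>A. restrict (\<lambda>(i, j). A $$ (i, j)) ({0..<n} \<times> {0..<m}))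
     (carrier_mat n m) (PiE ({0..<n} \<times> {0..<m}) (\<lambda>_. UNIV))"
proof (rule bij_betwI[where g = "Matrix.mat n m"])
  show "Matrix.mat n m (restrict (\<lambda>(i, j). A $$ (i, j)) ({0..<n} \<times> {0..<m})) = A"
    if "A \<in> carrier_mat n m" for A :: "'a mat"
    using that by (intro eq_matI) auto
  show "restrict (\<lambda>(i, j). Matrix.mat n m f $$ (i, j)) ({0..<n} \<times> {0..<m}) = f"
    if "f \<in> PiE ({0..<n} \<times> {0..<m}) (\<lambda>_. UNIV :: 'a set)" for f
    using that by (auto simp: PiE_def extensional_def fun_eq_iff)
qed auto

lemma finite_carrier_mat: "finite (carrier_mat n m :: 'a :: finite mat set)"
proof -
  have "finite (PiE ({0..<n} \<times> {0..<m}) (\<lambda>_. UNIV :: 'a set))" by (simp add: finite_PiE)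
  then show ?thesis using bij_betw_finite[OF bij_betw_carrier_mat_PiE] by blast
qed

lemma card_carrier_mat: "card (carrier_mat n m :: 'a :: finite mat set) = CARD('a) ^ (n * m)"
  using bij_betw_same_card[OF bij_betw_carrier_mat_PiE] by (simp add: card_PiE)

lemma add_mat_left_cancel_iff:
  fixes A B C :: "'a :: cancel_semigroup_add mat"
  assumes "A \<in> carrier_mat n m" "B \<in> carrier_mat n m" "C \<in> carrier_mat n m"
  shows "A + B = A + C \<longleftrightarrow> B = C"
proof
  assume sum_eq: "A + B = A + C"
  show "B = C"
  proof (rule eq_matI)
    fix i j assume "i < dim_row C" "j < dim_col C"
    then show "B $$ (i, j) = C $$ (i, j)"
      using arg_cong[OF sum_eq, of "\<lambda>M. M $$ (i, j)"] assms by simp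
  qed (use assms in auto)
qed simp

lemma (in vec_space) col_space_full_rank:
  assumes A: "A \<in> carrier_mat n nc" and rank: "rank A = n"
  shows "col_space A = carrier_vec n"
proof -
  obtain S where S: "maximal S (\<lambda>T. T \<subseteq> set (cols A) \<and> lin_indpt T)"
    using maximal_exists_superset[of "set (cols A)" "\<lambda>T. T \<subseteq> set (cols A) \<and> lin_indpt T" "{}"]
    by (auto simp: lin_dep_def)
  have S_cols: "S \<subseteq> set (cols A)" and "lin_indpt S" using S unfolding maximal_def by blast+
  have cols_carrier: "set (cols A) \<subseteq> carrier_vec n" using A cols_dim by blast
  have "card S = n" using rank_card_indpt[OF A S] rank by simp
  then have "basis S"
    using S_cols cols_carrier \<open>lin_indpt S\<close> finite_subset[OF S_cols]
    by (intro dim_li_is_basis) (auto simp: dim_is_n)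
  then have "carrier_vec n \<subseteq> span (set (cols A))"
    using span_is_monotone[OF S_cols] unfolding basis_def by simp
  then show ?thesis
    using span_is_subset2[OF cols_carrier] unfolding col_space_def by auto
qed

lemma full_row_rank_right_inverse:
  fixes F :: "'a :: field mat"
  assumes F: "F \<in> carrier_mat c s" and rank: "vec_space.rank c F = c"
  obtains R where "R \<in> carrier_mat s c" and "F * R = 1\<^sub>m c"
proof -
  interpret vec_space "TYPE('a)" c .
  have "\<exists>x \<in> carrier_vec s. F *\<^sub>v x = unit_vec c j" if "j < c" for j
    using col_space_full_rank[OF F rank] col_space_eq[OF F] F that by auto
  then obtain x where x: "\<And>j. j < c \<Longrightarrow> x j \<in> carrier_vec s \<and> F *\<^sub>v x j = unit_vec c j"
    by metis
  define R where "R = Matrix.mat s c (\<lambda>(i, j). x j $ i)"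
  have col_R: "col R j = x j" if "j < c" for j
    using x[OF that] that unfolding R_def by (intro eq_vecI) auto
  have "F * R = 1\<^sub>m c"
  proof (rule eq_matI)
    fix i j assume ij: "i < dim_row (1\<^sub>m c :: 'a mat)" "j < dim_col (1\<^sub>m c :: 'a mat)"
    then have "(F * R) $$ (i, j) = (F *\<^sub>v x j) $ i"
      using F col_R by (simp add: R_def)
    also have "\<dots> = 1\<^sub>m c $$ (i, j)" using x ij by simp
    finally show "(F * R) $$ (i, j) = 1\<^sub>m c $$ (i, j)" .
  qed (use F in \<open>auto simp: R_def\<close>)
  moreover have "R \<in> carrier_mat s c" by (simp add: R_def)
  ultimately show ?thesis using that by blast
qed

lemma card_left_kernel_lower_bound:
  fixes G :: "'a :: {finite, ring_1} mat"
  assumes G: "G \<in> carrier_mat n d"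
  shows "CARD('a) ^ (c * n) \<le> CARD('a) ^ (c * d) * card {M \<in> carrier_mat c n. M * G = 0\<^sub>m c d}"
proof -
  define K where "K = {M \<in> carrier_mat c n. M * G = 0\<^sub>m c d}"
  define rep where "rep Z = (SOME M. M \<in> carrier_mat c n \<and> M * G = Z)" for Z
  have rep: "rep (M * G) \<in> carrier_mat c n \<and> rep (M * G) * G = M * G"
    if "M \<in> carrier_mat c n" for M
    unfolding rep_def by (rule someI[of _ M]) (use that in auto)
  define f where "f M = (M * G, M - rep (M * G))" for M
  have "inj_on f (carrier_mat c n)"
  proof (rule inj_onI)
    fix M M' assume M: "M \<in> carrier_mat c n" and M': "M' \<in> carrier_mat c n" and "f M = f M'"
    then have diff: "M - rep (M * G) = M' - rep (M * G)" unfolding f_def by auto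
    have add_back: "A = (A - rep (M * G)) + rep (M * G)" if "A \<in> carrier_mat c n" for A :: "'a mat"
      using that rep[OF M] by (intro eq_matI) auto
    have "M = (M - rep (M * G)) + rep (M * G)" using add_back[OF M] .
    also have "\<dots> = (M' - rep (M * G)) + rep (M * G)" by (simp only: diff)
    also have "\<dots> = M'" using add_back[OF M'] by simp
    finally show "M = M'" .
  qed
  moreover have "f ` carrier_mat c n \<subseteq> carrier_mat c d \<times> K"
  proof (rule image_subsetI)
    fix M :: "'a mat" assume M: "M \<in> carrier_mat c n"
    have "(M - rep (M * G)) * G = M * G - rep (M * G) * G"
      using M rep[OF M] G by (intro minus_mult_distrib_mat) auto
    also have "\<dots> = 0\<^sub>m c d" using M G rep[OF M] by (intro eq_matI) auto
    finally show "f M \<in> carrier_mat c d \<times> K" unfolding f_def K_def using M G rep[OF M] by auto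
  qed
  moreover have "finite (carrier_mat c d \<times> K :: ('a mat \<times> 'a mat) set)"
    unfolding K_def
    by (rule finite_cartesian_product[OF finite_carrier_mat finite_subset[OF _ finite_carrier_mat]]) auto
  ultimately have "card (carrier_mat c n :: 'a mat set)
      \<le> card (carrier_mat c d \<times> K :: ('a mat \<times> 'a mat) set)"
    by (rule card_inj_on_le)
  then show ?thesis by (simp add: K_def card_cartesian_product card_carrier_mat)
qed

lemma card_left_kernel_mult_card_fibre_le:
  fixes F G R :: "'a :: {finite, ring_1} mat"
  assumes F: "F \<in> carrier_mat c s" and G: "G \<in> carrier_mat n d"
    and R: "R \<in> carrier_mat s c" and FR: "F * R = 1\<^sub>m c"
  shows "card {M \<in> carrier_mat c n. M * G = 0\<^sub>m c d}
      * card {E \<in> carrier_mat s n. F * E = X \<and> E * G = Y}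
    \<le> card {E \<in> carrier_mat s n. E * G = Y}"
proof -
  define K where "K = {M \<in> carrier_mat c n. M * G = 0\<^sub>m c d}"
  define B where "B = {E \<in> carrier_mat s n. F * E = X \<and> E * G = Y}"
  define A where "A = {E \<in> carrier_mat s n. E * G = Y}"
  define f where "f = (\<lambda>(M, E). E + R * M)"
  have F_shift: "F * (E + R * M) = F * E + M"
    if "M \<in> carrier_mat c n" "E \<in> carrier_mat s n" for M E
  proof -
    have "F * (E + R * M) = F * E + F * (R * M)"
      using F R that by (intro mult_add_distrib_mat) auto
    also have "F * (R * M) = (F * R) * M" using assoc_mult_mat[OF F R, of M] that by simp
    also have "\<dots> = M" using FR that by simp
    finally show ?thesis .
  qed
  have "inj_on f (K \<times> B)"
  proof (rule inj_onI)
    fix p p' assume "p \<in> K \<times> B" "p' \<in> K \<times> B" and "f p = f p'"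
    moreover obtain M E M' E' where p: "p = (M, E)" "p' = (M', E')" by (cases p, cases p')
    ultimately have M: "M \<in> carrier_mat c n" "M' \<in> carrier_mat c n"
      and E: "E \<in> carrier_mat s n" "E' \<in> carrier_mat s n" and "F * E = X" "F * E' = X"
      and eq: "E + R * M = E' + R * M'"
      unfolding K_def B_def f_def by auto
    have "X + M = X + M'"
      using F_shift[of M E] F_shift[of M' E'] eq M E \<open>F * E = X\<close> \<open>F * E' = X\<close> by simp
    then have "M = M'" using add_mat_left_cancel_iff[of X c n M M'] F E M \<open>F * E = X\<close> by auto
    moreover have "E + R * M = R * M + E" "E' + R * M = R * M + E'"
      using R M E comm_add_mat[of E s n "R * M"] comm_add_mat[of E' s n "R * M"] by simp_all
    ultimately have "R * M + E = R * M + E'" using eq by simp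
    then show "p = p'"
      unfolding p using add_mat_left_cancel_iff[of "R * M" s n E E'] R M E \<open>M = M'\<close> by simp
  qed
  moreover have "f ` (K \<times> B) \<subseteq> A"
  proof clarify
    fix M E assume "M \<in> K" "E \<in> B"
    then have M: "M \<in> carrier_mat c n" "M * G = 0\<^sub>m c d"
      and E: "E \<in> carrier_mat s n" "E * G = Y"
      unfolding K_def B_def by auto
    have "(E + R * M) * G = E * G + R * (M * G)"
      using add_mult_distrib_mat[of E s n "R * M" G d] E R M G by simp
    also have "\<dots> = E * G" using E(1) M R G by simp
    also have "\<dots> = Y" by (rule E(2))
    finally show "f (M, E) \<in> A" unfolding A_def f_def using E R M by auto
  qed
  moreover have "finite A" unfolding A_def by (rule finite_subset[OF _ finite_carrier_mat]) auto
  ultimately have "card (K \<times> B) \<le> card A" by (rule card_inj_on_le)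
  then show ?thesis by (simp add: K_def B_def A_def card_cartesian_product)
qed

lemma card_joint_fibre_le:
  fixes F G :: "'a :: {finite, field} mat"
  assumes F: "F \<in> carrier_mat c s" and rank: "vec_space.rank c F = c" and G: "G \<in> carrier_mat n d"
  shows "CARD('a) ^ (c * n) * card {E \<in> carrier_mat s n. F * E = X \<and> E * G = Y}
    \<le> CARD('a) ^ (c * d) * card {E \<in> carrier_mat s n. E * G = Y}"
proof -
  obtain R where R: "R \<in> carrier_mat s c" and FR: "F * R = 1\<^sub>m c"
    using full_row_rank_right_inverse[OF F rank] .
  let ?K = "card {M \<in> carrier_mat c n. M * G = 0\<^sub>m c d}"
  have "CARD('a) ^ (c * n) * card {E \<in> carrier_mat s n. F * E = X \<and> E * G = Y}
      \<le> CARD('a) ^ (c * d) * ?K * card {E \<in> carrier_mat s n. F * E = X \<and> E * G = Y}"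
    using card_left_kernel_lower_bound[OF G] by (rule mult_right_mono) simp
  also have "\<dots> \<le> CARD('a) ^ (c * d) * card {E \<in> carrier_mat s n. E * G = Y}"
    using card_left_kernel_mult_card_fibre_le[OF F G R FR] by (simp add: mult.assoc)
  finally show ?thesis .
qed

lemma cond_entropy_pmf_ge:
  fixes p :: "'w pmf" and X :: "'w \<Rightarrow> 'x" and Y :: "'w \<Rightarrow> 'y"
  assumes b: "1 < b" and fin: "finite (set_pmf p)"
    and ratio: "\<And>w. w \<in> set_pmf p \<Longrightarrow>
      b powr k * measure_pmf.prob p {v. X v = X w \<and> Y v = Y w} \<le> measure_pmf.prob p {v. Y v = Y w}"
  shows "k \<le> cond_entropy_pmf b p X Y"
proof -
  define g where "g w = (X w, Y w)" for w
  define P where "P xy = measure_pmf.prob p {v. X v = fst xy \<and> Y v = snd xy}" for xy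
  define PY where "PY xy = measure_pmf.prob p {v. Y v = snd xy}" for xy :: "'x \<times> 'y"
  have term_le: "P xy * log b (P xy / PY xy) \<le> P xy * - k"
    if xy_in: "xy \<in> g ` set_pmf p" for xy
  proof (cases "P xy = 0")
    case False
    then have "0 < P xy" unfolding P_def by (simp add: order_less_le)
    obtain w where "w \<in> set_pmf p" and xy: "xy = g w" using xy_in by blast
    then have "b powr k * P xy \<le> PY xy" using ratio unfolding P_def PY_def g_def by simp
    moreover have "0 < b powr k * P xy" using \<open>0 < P xy\<close> b by simp
    ultimately have "0 < PY xy" by linarith
    have "P xy / PY xy \<le> b powr - k"
      using \<open>b powr k * P xy \<le> PY xy\<close> \<open>0 < PY xy\<close> b
      by (simp add: powr_minus divide_simps mult.commute)
    moreover have "0 < P xy / PY xy" using \<open>0 < P xy\<close> \<open>0 < PY xy\<close> by simp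
    ultimately have "log b (P xy / PY xy) \<le> - k" using b by (simp add: log_le_iff)
    then show ?thesis using \<open>0 < P xy\<close> by (intro mult_left_mono) auto
  qed simp
  have "P xy = pmf (map_pmf g p) xy" for xy
  proof -
    have "g -` {xy} = {v. X v = fst xy \<and> Y v = snd xy}" unfolding g_def by (cases xy) auto
    then show ?thesis unfolding P_def by (simp add: pmf_map)
  qed
  then have total: "(\<Sum>xy \<in> g ` set_pmf p. P xy) = 1"
    using fin by (simp add: sum_pmf_eq_1)
  have "(\<Sum>xy \<in> g ` set_pmf p. P xy * log b (P xy / PY xy))
      \<le> (\<Sum>xy \<in> g ` set_pmf p. P xy * - k)"
    by (rule sum_mono) (rule term_le)
  also have "\<dots> = - k" using total by (simp add: sum_distrib_right[symmetric] sum_negf)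
  finally show ?thesis
    unfolding cond_entropy_pmf_def Let_def P_def PY_def g_def by simp
qed

lemma cond_entropy_pmf_of_set_ge:
  fixes \<Omega> :: "'w set" and X :: "'w \<Rightarrow> 'x" and Y :: "'w \<Rightarrow> 'y"
  assumes b: "1 < b" and fin: "finite \<Omega>" and nonempty: "\<Omega> \<noteq> {}"
    and ratio: "\<And>w. w \<in> \<Omega> \<Longrightarrow>
      b powr k * card {v \<in> \<Omega>. X v = X w \<and> Y v = Y w} \<le> card {v \<in> \<Omega>. Y v = Y w}"
  shows "k \<le> cond_entropy_pmf b (pmf_of_set \<Omega>) X Y"
proof (rule cond_entropy_pmf_ge[OF b])
  fix w assume "w \<in> set_pmf (pmf_of_set \<Omega>)"
  then have "b powr k * card {v \<in> \<Omega>. X v = X w \<and> Y v = Y w} / card \<Omega>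
      \<le> card {v \<in> \<Omega>. Y v = Y w} / card \<Omega>"
    using ratio fin nonempty by (intro divide_right_mono) auto
  then show "b powr k * measure_pmf.prob (pmf_of_set \<Omega>) {v. X v = X w \<and> Y v = Y w}
      \<le> measure_pmf.prob (pmf_of_set \<Omega>) {v. Y v = Y w}"
    using fin nonempty by (simp add: measure_pmf_of_set Int_def)
qed (use fin nonempty in simp)

theorem lemma1:
  fixes c d s :: nat
    and F G :: "'a :: {finite, field} mat"
  assumes "0 < c" and "0 < d" and "0 < s"
    and "c \<le> s" and "d \<le> s"
    and "F \<in> carrier_mat c s" and "G \<in> carrier_mat s d"
    and "vec_space.rank c F = c"
    and "vec_space.rank s G = d"
  shows "cond_entropy_pmf (real CARD('a)) (pmf_of_set (carrier_mat s s))
           (\<lambda>E. F * E) (\<lambda>E. E * G)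
         \<ge> real c * real s - real c * real d"
proof (rule cond_entropy_pmf_of_set_ge)
  let ?q = "real CARD('a)"
  have "card {0 :: 'a, 1} \<le> CARD('a)" by (rule card_mono) auto
  then show q: "1 < ?q" by simp
  have powr_eq: "?q powr (real c * real s - real c * real d) = ?q ^ (c * s) / ?q ^ (c * d)"
    using q by (simp add: powr_diff powr_realpow flip: of_nat_mult)
  fix W
  have "?q ^ (c * s) * card {E \<in> carrier_mat s s. F * E = F * W \<and> E * G = W * G}
      \<le> ?q ^ (c * d) * card {E \<in> carrier_mat s s. E * G = W * G}"
    using card_joint_fibre_le[OF assms(6,8,7)] by (simp flip: of_nat_power of_nat_mult)
  then show "?q powr (real c * real s - real c * real d)
      * card {E \<in> carrier_mat s s. F * E = F * W \<and> E * G = W * G}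
      \<le> card {E \<in> carrier_mat s s. E * G = W * G}"
    using q by (simp add: powr_eq field_simps)
qed (use finite_carrier_mat zero_carrier_mat in blast)+

end
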